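(* Let $p$ be an odd prime and let $N(p)$ be the number of residue classes $c\in\mathbb{Z}/(p)$ for which the polynomial $\Phi_{3,\tilde f}(x)$ attached to $\tilde f(x)=x^2+c$ over $\mathbb{Z}/(p)$ has a linear factor modulo $p$. Then $$N(p)\le \frac13\left(p+2\left(\frac{-3}{p}\right)\right),$$ where $\left(\frac{-3}{p}\right)$ is the Legendre symbol (equal to $0$ for $p=3$).
   Context: For $f(x)=x^2+c$, $\Phi_{3,f}(x)=\frac{f^3(x)-x}{f(x)-x}$, where $f^3$ is the threefold iterate; explicitly $\Phi_{3,f}(x)=x^6+x^5+(3c+1)x^4+(2c+1)x^3+(3c^2+3c+1)x^2+(c^2+2c+1)x+c^3+2c^2+c+1$, considered modulo $p$. *)

theory Defs
  imports "HOL-Computational_Algebra.Polynomial" "HOL-Number_Theory.Number_Theory"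
begin

text \<open>Phi_{3,f} for f(x) = x^2 + c, as an integer polynomial (explicit form from the paper).\<close>
definition Phi3 :: "int \<Rightarrow> int poly" where
  "Phi3 c = [: c^3 + 2*c^2 + c + 1, c^2 + 2*c + 1, 3*c^2 + 3*c + 1, 2*c + 1, 3*c + 1, 1, 1 :]"

text \<open>P has a linear factor modulo p: P == (a + b x) * q (mod p) coefficientwise,
  with b a unit mod p (i.e. the factor really has degree 1 over Z/(p)).\<close>
definition has_linear_factor_mod :: "int \<Rightarrow> int poly \<Rightarrow> bool" where
  "has_linear_factor_mod p P \<longleftrightarrow>
     (\<exists>a b :: int. \<exists>q :: int poly. \<not> p dvd b \<and>
        (\<forall>i. p dvd Polynomial.coeff (P - [:a, b:] * q) i))"

definition Ncount :: "int \<Rightarrow> nat" where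
  "Ncount p = card {c \<in> {0..p-1}. has_linear_factor_mod p (Phi3 c)}"

end

theory Submission
  imports Defs
begin

text \<open>A root \<open>x\<close> of \<open>\<Phi>\<^sub>3\<close> modulo \<open>p\<close> yields \<open>t = x + f x\<close> with \<open>t \<noteq> 0, -1\<close> and
  \<open>Psi c t \<equiv> 0\<close>. The roots of \<open>Psi c\<close> in \<open>\<int>/(p) - {0, -1}\<close> are permuted by the Moebius map
  \<open>t \<mapsto> -1/(t+1)\<close> of order 3, whose fixed points are the roots of \<open>t\<^sup>2 + t + 1\<close>, i.e.
  \<open>1 + (-3/p)\<close> points. So every admissible \<open>c\<close> owns either three roots of \<open>Psi c\<close> or one
  fixed point, and since \<open>Psi\<close> is linear in \<open>c\<close> with coefficient \<open>4t\<^sup>2(t+1)\<^sup>2\<close>, different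
  \<open>c\<close> own different roots. Counting the \<open>p - 2\<close> available residues, with weight 3 on the
  fixed points, gives \<open>3N(p) \<le> (p - 2) + 2(1 + (-3/p))\<close>.\<close>

lemma poly_Phi3:
  "poly (Phi3 c) x = x^6 + x^5 + (3*c+1)*x^4 + (2*c+1)*x^3 + (3*c^2+3*c+1)*x^2
     + (c^2+2*c+1)*x + c^3 + 2*c^2 + c + 1"
  unfolding Phi3_def by (simp add: algebra_simps eval_nat_numeral)

lemma poly_Phi3_eq_1_plus_pair_sum:
  "poly (Phi3 c) x = 1 + (x + x^2 + c) * (1 + 2*c + c^2 + x^2 + 2*x^2*c + x^4)"
  unfolding poly_Phi3 by (simp add: algebra_simps eval_nat_numeral)

lemma poly_Phi3_eq_1_plus_pair_sum_plus_1:
  "poly (Phi3 c) x = 1 + (x + x^2 + c + 1) * (c + c^2 + x + 2*x^2*c + x^4)"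
  unfolding poly_Phi3 by (simp add: algebra_simps eval_nat_numeral)

text \<open>If \<open>x \<mapsto> f x \<mapsto> f\<^sup>2 x\<close> is a 3-cycle of \<open>f = x\<^sup>2 + c\<close>, the three sums \<open>x + f x\<close> of
  consecutive points are roots of \<open>Psi c\<close>, cyclically permuted by \<open>t \<mapsto> -1/(t+1)\<close>.\<close>
definition Psi :: "int \<Rightarrow> int \<Rightarrow> int" where
  "Psi c t = 4*t^2*(t+1)^2*c + (t^6 + 2*t^5 + 4*t^4 + 8*t^3 + 9*t^2 + 4*t + 1)"

lemma Psi_pair_sum:
  "Psi c (x + x^2 + c) = poly (Phi3 c) x *
     (1 + 3*c + 4*c^2 + c^3 + 3*x + 10*x*c + 5*x*c^2 + 9*x^2 + 15*x^2*c + 3*x^2*c^2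
      + 13*x^3 + 10*x^3*c + 11*x^4 + 3*x^4*c + 5*x^5 + x^6)"
  unfolding poly_Phi3 Psi_def by (simp add: algebra_simps eval_nat_numeral)

lemma Psi_moebius_dvd: "s*(t+1) + 1 dvd (t+1)^6 * Psi c s - Psi c t"
proof
  define m where "m = s*(t+1) + 1"
  show "(t+1)^6 * Psi c s - Psi c t = m * (
    - 2 - 2*t + 8*t*c - 12*t^2 + 8*t^2*c - 8*t^3 - 8*t^3*c + 2*t^4 - 8*t^4*c + 4*t^5
    + 4*m + 4*m*c - 8*m*t - 8*m*t*c + 6*m*t^2 - 24*m*t^2*c + 12*m*t^3 - 8*m*t^3*c
    + 9*m*t^4 + 4*m*t^4*c - 8*m^2 - 8*m^2*c + 12*m^2*t - 8*m^2*t*c + 8*m^2*t^2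
    + 8*m^2*t^2*c + 8*m^2*t^3 + 8*m^2*t^3*c + 9*m^3 + 4*m^3*c - 2*m^3*t + 8*m^3*t*c
    + 4*m^3*t^2 + 4*m^3*t^2*c - 4*m^4 + 2*m^4*t + m^5)"
    unfolding m_def Psi_def by (simp add: algebra_simps eval_nat_numeral)
qed

lemma Psi_diff: "Psi c t - Psi c' t = 4*t^2*(t+1)^2*(c - c')"
  unfolding Psi_def by (simp add: algebra_simps)

lemma cong_Psi: "[a = b] (mod p) \<Longrightarrow> [Psi c a = Psi c b] (mod p)"
  unfolding Psi_def by (intro cong_add cong_mult cong_pow cong_refl)

lemma prime_dvd_1_plus_mult_imp_not_dvd:
  fixes p :: int
  assumes "prime p" and "p dvd 1 + a * b"
  shows "\<not> p dvd a"
proof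
  assume "p dvd a"
  then have "p dvd 1"
    using assms(2) by (simp add: dvd_add_left_iff)
  then show False
    using assms(1) not_prime_unit by blast
qed

lemma has_linear_factor_mod_imp_root:
  fixes p :: int and P :: "int poly"
  assumes "prime p" and "has_linear_factor_mod p P"
  shows "\<exists>x. p dvd poly P x"
proof -
  obtain a b q where "\<not> p dvd b" and coeffs: "\<forall>i. p dvd Polynomial.coeff (P - [:a, b:] * q) i"
    using assms(2) unfolding has_linear_factor_mod_def by blast
  then have "coprime b p"
    using assms(1) by (metis coprime_commute prime_imp_coprime)
  then obtain v where v: "[b * v = 1] (mod p)"
    using cong_solve_coprime_int by blast
  define x where "x = - a * v"
  have "p dvd poly (P - [:a, b:] * q) x"
    unfolding poly_altdef using coeffs by (intro dvd_sum) simp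
  then have "p dvd poly P x - (a + b*x) * poly q x"
    by (simp add: algebra_simps)
  moreover have "a + b*x = - a * (b*v - 1)"
    unfolding x_def by (simp add: algebra_simps)
  then have "p dvd (a + b*x) * poly q x"
    using v by (simp add: cong_iff_dvd_diff)
  ultimately show ?thesis
    by (metis dvd_diff_left_iff)
qed

text \<open>The residues \<open>1, \<dots>, p - 2\<close> represent \<open>\<int>/(p) - {0, -1}\<close>, the set permuted by
  \<open>t \<mapsto> -1/(t+1)\<close>.\<close>
definition Psi_roots :: "int \<Rightarrow> int \<Rightarrow> int set" where
  "Psi_roots p c = {t \<in> {1..p-2}. p dvd Psi c t}"

definition moebius_fixed_points :: "int \<Rightarrow> int set" where
  "moebius_fixed_points p = {t \<in> {1..p-2}. p dvd t^2 + t + 1}"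

lemma finite_Psi_roots: "finite (Psi_roots p c)"
  unfolding Psi_roots_def by (auto intro: finite_subset[of _ "{1..p-2}"])

lemma finite_moebius_fixed_points: "finite (moebius_fixed_points p)"
  unfolding moebius_fixed_points_def by (auto intro: finite_subset[of _ "{1..p-2}"])

lemma Psi_roots_nonempty:
  assumes "prime p" and root: "p dvd poly (Phi3 c) x"
  shows "Psi_roots p c \<noteq> {}"
proof -
  define t where "t = (x + x^2 + c) mod p"
  have p: "p > 1" using assms(1) prime_gt_1_int by blast
  have t_range: "0 \<le> t" "t < p"
    unfolding t_def using p by auto
  have t_cong: "[t = x + x^2 + c] (mod p)"
    unfolding t_def by (simp add: cong_def)
  have "\<not> p dvd x + x^2 + c"
    using assms(1) root unfolding poly_Phi3_eq_1_plus_pair_sum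
    by (rule prime_dvd_1_plus_mult_imp_not_dvd)
  then have "t \<noteq> 0"
    unfolding t_def by auto
  moreover have "\<not> p dvd x + x^2 + c + 1"
    using assms(1) root unfolding poly_Phi3_eq_1_plus_pair_sum_plus_1
    by (rule prime_dvd_1_plus_mult_imp_not_dvd)
  then have "t \<noteq> p - 1"
  proof (rule contrapos_nn)
    assume "t = p - 1"
    with t_cong have "p dvd (p - 1) - (x + x^2 + c)"
      by (simp add: cong_iff_dvd_diff)
    also have "(p - 1) - (x + x^2 + c) = p - (x + x^2 + c + 1)"
      by simp
    finally show "p dvd x + x^2 + c + 1"
      by (simp add: dvd_diff_right_iff)
  qed
  moreover have "p dvd Psi c t"
    using cong_Psi[OF t_cong, of c] root unfolding Psi_pair_sum
    by (simp add: cong_dvd_iff)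
  ultimately have "t \<in> Psi_roots p c"
    unfolding Psi_roots_def using t_range by auto
  then show ?thesis by blast
qed

lemma moebius_image_in_Psi_roots:
  assumes "prime p" and t: "t \<in> Psi_roots p c"
  shows "\<exists>s \<in> Psi_roots p c. p dvd s*(t+1) + 1"
proof -
  have p: "p > 1" using assms(1) prime_gt_1_int by blast
  have t_range: "1 \<le> t" "t \<le> p - 2" and "p dvd Psi c t"
    using t unfolding Psi_roots_def by auto
  have "\<not> p dvd t" "\<not> p dvd t + 1"
    using t_range zdvd_not_zless[of t p] zdvd_not_zless[of "t + 1" p] by auto
  then obtain v where v: "[(t+1) * v = 1] (mod p)"
    using assms(1) cong_solve_coprime_int prime_imp_coprime coprime_commute by metis
  define s where "s = (- v) mod p"
  have s_range: "0 \<le> s" "s < p"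
    unfolding s_def using p by auto
  have "[s * (t+1) = - v * (t+1)] (mod p)"
    unfolding s_def by (intro cong_mult cong_refl) (simp add: cong_def)
  also have "[- v * (t+1) = - 1] (mod p)"
    using v by (metis cong_minus_minus_iff mult.commute mult_minus_left)
  finally have st: "p dvd s*(t+1) + 1"
    by (simp add: cong_iff_dvd_diff)
  have "s \<noteq> 0"
    using st assms(1) not_prime_unit by auto
  moreover have "s \<noteq> p - 1"
  proof
    assume "s = p - 1"
    have "s*(t+1) + 1 = p*(t+1) - t"
      unfolding \<open>s = p - 1\<close> by (simp add: algebra_simps)
    with st have "p dvd t"
      by (simp add: dvd_diff_right_iff)
    with \<open>\<not> p dvd t\<close> show False ..
  qed
  moreover have "p dvd (t+1)^6 * Psi c s"
    using dvd_trans[OF st Psi_moebius_dvd[of s t c]] \<open>p dvd Psi c t\<close>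
    by (simp add: dvd_diff_left_iff)
  then have "p dvd Psi c s"
    using assms(1) \<open>\<not> p dvd t + 1\<close> by (simp add: prime_dvd_mult_iff prime_dvd_power_iff)
  ultimately have "s \<in> Psi_roots p c"
    unfolding Psi_roots_def using s_range by auto
  with st show ?thesis by blast
qed

lemma moebius_fixed_point_identity:
  "(t+1)^2 * (s^2 + s + 1) - (t^2 + t + 1) = (s*(t+1) + 1) * (s*(t+1) + t)"
  for s t :: int
  by (simp add: power2_eq_square algebra_simps)

lemma card_Psi_roots_ge_3:
  assumes "prime p" and t: "t \<in> Psi_roots p c"
    and not_fixed: "t \<notin> moebius_fixed_points p"
  shows "3 \<le> card (Psi_roots p c)"
proof -
  obtain s where s: "s \<in> Psi_roots p c" and st: "p dvd s*(t+1) + 1"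
    using moebius_image_in_Psi_roots[OF assms(1) t] by blast
  obtain u where u: "u \<in> Psi_roots p c" and us: "p dvd u*(s+1) + 1"
    using moebius_image_in_Psi_roots[OF assms(1) s] by blast
  have t_not_fixed: "\<not> p dvd t^2 + t + 1"
    using t not_fixed unfolding Psi_roots_def moebius_fixed_points_def by auto
  have reps: "0 \<le> y \<and> y < p" if "y \<in> Psi_roots p c" for y
    using that unfolding Psi_roots_def by auto
  have "s \<noteq> t"
    using st t_not_fixed by (auto simp: power2_eq_square algebra_simps)
  moreover have "u \<noteq> t"
  proof
    assume "u = t"
    with us have "p dvd t*(s+1) + 1"
      by simp
    then have "p dvd (t*(s+1) + 1) - (s*(t+1) + 1)"
      using st by (rule dvd_diff)
    then have "[t = s] (mod p)"
      by (simp add: cong_iff_dvd_diff algebra_simps)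
    with \<open>s \<noteq> t\<close> show False
      using cong_less_imp_eq_int reps[OF t] reps[OF s] by metis
  qed
  moreover have "u \<noteq> s"
  proof
    assume "u = s"
    with us have "p dvd s^2 + s + 1"
      by (simp add: power2_eq_square algebra_simps)
    then have "p dvd (t+1)^2 * (s^2 + s + 1)"
      by (rule dvd_mult)
    moreover have "p dvd (t+1)^2 * (s^2 + s + 1) - (t^2 + t + 1)"
      unfolding moebius_fixed_point_identity using st by simp
    ultimately show False
      using t_not_fixed by (simp add: dvd_diff_right_iff)
  qed
  ultimately have "card {t, s, u} = 3"
    by auto
  moreover have "{t, s, u} \<subseteq> Psi_roots p c"
    using t s u by auto
  ultimately show ?thesis
    using card_mono[OF finite_Psi_roots] by metis
qed

lemma Psi_roots_weight:
  assumes "prime p" and "p dvd poly (Phi3 c) x"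
  shows "3 \<le> card (Psi_roots p c) + 2 * card (Psi_roots p c \<inter> moebius_fixed_points p)"
proof -
  obtain t where t: "t \<in> Psi_roots p c"
    using Psi_roots_nonempty[OF assms] by blast
  show ?thesis
  proof (cases "t \<in> moebius_fixed_points p")
    case True
    with t have "card (Psi_roots p c) \<ge> 1" "card (Psi_roots p c \<inter> moebius_fixed_points p) \<ge> 1"
      using finite_Psi_roots finite_moebius_fixed_points
      by (auto simp: Suc_le_eq card_gt_0_iff)
    then show ?thesis by linarith
  next
    case False
    then show ?thesis
      using card_Psi_roots_ge_3[OF assms(1) t] by linarith
  qed
qed

lemma Psi_roots_disjoint:
  assumes "prime p" "odd p" and c: "c \<in> {0..p-1}" "c' \<in> {0..p-1}"
    and t: "t \<in> Psi_roots p c" "t \<in> Psi_roots p c'"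
  shows "c = c'"
proof -
  have t_range: "1 \<le> t" "t \<le> p - 2"
    using t unfolding Psi_roots_def by auto
  then have "\<not> p dvd t" "\<not> p dvd t + 1"
    using zdvd_not_zless[of t p] zdvd_not_zless[of "t + 1" p] by auto
  moreover have "\<not> p dvd 2"
    using assms(2) t_range by (auto dest: zdvd_imp_le)
  then have "\<not> p dvd 4"
    using prime_dvd_power_iff[OF assms(1), of 2 2] by simp
  moreover have "p dvd 4 * t^2 * (t+1)^2 * (c - c')"
    unfolding Psi_diff[symmetric] using t unfolding Psi_roots_def by (auto intro: dvd_diff)
  ultimately have "[c = c'] (mod p)"
    using assms(1) by (simp add: prime_dvd_mult_iff prime_dvd_power_iff cong_iff_dvd_diff)
  with c show ?thesis
    using cong_less_imp_eq_int by auto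
qed

lemma moebius_fixed_point_imp_QuadRes:
  assumes "t \<in> moebius_fixed_points p"
  shows "QuadRes p (-3)"
proof -
  have "p dvd t^2 + t + 1"
    using assms unfolding moebius_fixed_points_def by simp
  then have "p dvd 4 * (t^2 + t + 1)"
    by (rule dvd_mult)
  also have "4 * (t^2 + t + 1) = (2*t + 1)^2 - (-3)"
    by (simp add: power2_eq_square algebra_simps)
  finally have "[(2*t + 1)^2 = -3] (mod p)"
    by (simp add: cong_iff_dvd_diff)
  then show ?thesis
    unfolding QuadRes_def by blast
qed

text \<open>The other fixed point is \<open>-1 - t\<^sub>0\<close>, as the roots of \<open>t\<^sup>2 + t + 1\<close> sum to \<open>-1\<close>.\<close>
lemma card_moebius_fixed_points_le_2:
  assumes "prime p"
  shows "card (moebius_fixed_points p) \<le> 2"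
proof (cases "moebius_fixed_points p = {}")
  case False
  then obtain t\<^sub>0 where t\<^sub>0: "t\<^sub>0 \<in> moebius_fixed_points p"
    by blast
  have "moebius_fixed_points p \<subseteq> {t\<^sub>0, (-1 - t\<^sub>0) mod p}"
  proof
    fix t assume t: "t \<in> moebius_fixed_points p"
    have reps: "0 \<le> t" "t < p" "0 \<le> t\<^sub>0" "t\<^sub>0 < p"
      using t t\<^sub>0 unfolding moebius_fixed_points_def by auto
    have "(t^2 + t + 1) - (t\<^sub>0^2 + t\<^sub>0 + 1) = (t - t\<^sub>0) * (t - (-1 - t\<^sub>0))"
      by (simp add: power2_eq_square algebra_simps)
    moreover have "p dvd (t^2 + t + 1) - (t\<^sub>0^2 + t\<^sub>0 + 1)"
      using t t\<^sub>0 unfolding moebius_fixed_points_def by (blast intro: dvd_diff)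
    ultimately have "p dvd (t - t\<^sub>0) * (t - (-1 - t\<^sub>0))"
      by simp
    then have "[t = t\<^sub>0] (mod p) \<or> [t = -1 - t\<^sub>0] (mod p)"
      unfolding cong_iff_dvd_diff by (rule prime_dvd_multD[OF assms])
    then show "t \<in> {t\<^sub>0, (-1 - t\<^sub>0) mod p}"
    proof
      assume "[t = t\<^sub>0] (mod p)"
      then show ?thesis
        using cong_less_imp_eq_int[OF reps] by simp
    next
      assume "[t = -1 - t\<^sub>0] (mod p)"
      then have "t mod p = (-1 - t\<^sub>0) mod p"
        unfolding cong_def .
      then show ?thesis
        using reps by simp
    qed
  qed
  then have "card (moebius_fixed_points p) \<le> card {t\<^sub>0, (-1 - t\<^sub>0) mod p}"
    by (rule card_mono[rotated]) simp
  also have "\<dots> \<le> 2"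
    by (simp add: card_insert_if)
  finally show ?thesis .
qed simp

lemma card_moebius_fixed_points_le_Legendre:
  assumes "prime p" "odd p"
  shows "int (card (moebius_fixed_points p)) \<le> 1 + Legendre (-3) p"
proof (cases "moebius_fixed_points p = {}")
  case True
  then show ?thesis
    by (simp add: Legendre_def)
next
  case False
  then have "QuadRes p (-3)"
    using moebius_fixed_point_imp_QuadRes by blast
  show ?thesis
  proof (cases "[-3 = 0] (mod p)")
    case True
    then have "p \<le> 3"
      by (auto simp: cong_0_iff dest: zdvd_imp_le)
    moreover have "p \<noteq> 2"
      using assms(2) by auto
    ultimately have "p = 3"
      using prime_gt_1_int[OF assms(1)] by linarith
    then have "moebius_fixed_points p \<subseteq> {1}"
      unfolding moebius_fixed_points_def by auto
    then have "card (moebius_fixed_points p) \<le> card {1::int}"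
      by (rule card_mono[rotated]) simp
    then have "card (moebius_fixed_points p) \<le> 1"
      by simp
    with True show ?thesis
      by (simp add: Legendre_def)
  next
    case False
    with \<open>QuadRes p (-3)\<close> show ?thesis
      using card_moebius_fixed_points_le_2[OF assms(1)] by (simp add: Legendre_def)
  qed
qed

lemma card_le_of_weighted_disjoint_family:
  fixes S :: "'a set" and A :: "'a \<Rightarrow> 'b set"
  assumes "finite S" "finite U" "finite F"
    and subset: "\<And>c. c \<in> S \<Longrightarrow> A c \<subseteq> U"
    and disjoint: "\<And>c c'. c \<in> S \<Longrightarrow> c' \<in> S \<Longrightarrow> c \<noteq> c' \<Longrightarrow> A c \<inter> A c' = {}"
    and weight: "\<And>c. c \<in> S \<Longrightarrow> k \<le> card (A c) + w * card (A c \<inter> F)"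
  shows "k * card S \<le> card U + w * card F"
proof -
  have fin: "\<forall>c\<in>S. finite (A c)" "\<forall>c\<in>S. finite (A c \<inter> F)"
    using assms(2) subset by (auto intro: finite_subset)
  have disj: "\<forall>c\<in>S. \<forall>c'\<in>S. c \<noteq> c' \<longrightarrow> A c \<inter> A c' = {}"
    "\<forall>c\<in>S. \<forall>c'\<in>S. c \<noteq> c' \<longrightarrow> (A c \<inter> F) \<inter> (A c' \<inter> F) = {}"
    using disjoint by blast+
  have "k * card S = (\<Sum>c\<in>S. k)"
    by simp
  also have "\<dots> \<le> (\<Sum>c\<in>S. card (A c) + w * card (A c \<inter> F))"
    using weight by (rule sum_mono)
  also have "\<dots> = (\<Sum>c\<in>S. card (A c)) + w * (\<Sum>c\<in>S. card (A c \<inter> F))"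
    by (simp add: sum.distrib sum_distrib_left)
  also have "\<dots> = card (\<Union>c\<in>S. A c) + w * card (\<Union>c\<in>S. A c \<inter> F)"
    unfolding card_UN_disjoint[OF \<open>finite S\<close> fin(1) disj(1)]
      card_UN_disjoint[OF \<open>finite S\<close> fin(2) disj(2)] ..
  also have "\<dots> \<le> card U + w * card F"
    using subset assms(2,3) by (intro add_mono mult_le_mono2 card_mono) auto
  finally show ?thesis .
qed

theorem theorem15:
  fixes p :: int
  assumes "prime p" and "odd p"
  shows "3 * int (Ncount p) \<le> p + 2 * Legendre (-3) p"
proof -
  define S where "S = {c \<in> {0..p-1}. has_linear_factor_mod p (Phi3 c)}"
  have "3 * card S \<le> card {1..p-2} + 2 * card (moebius_fixed_points p)"
  proof (rule card_le_of_weighted_disjoint_family)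
    show "finite S"
      unfolding S_def by (auto intro: finite_subset[of _ "{0..p-1}"])
    show "3 \<le> card (Psi_roots p c) + 2 * card (Psi_roots p c \<inter> moebius_fixed_points p)"
      if "c \<in> S" for c
      using that has_linear_factor_mod_imp_root[OF assms(1)] Psi_roots_weight[OF assms(1)]
      unfolding S_def by blast
    show "Psi_roots p c \<inter> Psi_roots p c' = {}" if "c \<in> S" "c' \<in> S" "c \<noteq> c'" for c c'
      using that Psi_roots_disjoint[OF assms] unfolding S_def by blast
  qed (auto simp: Psi_roots_def finite_moebius_fixed_points)
  moreover have "Ncount p = card S"
    unfolding Ncount_def S_def ..
  ultimately show ?thesis
    using card_moebius_fixed_points_le_Legendre[OF assms] prime_gt_1_int[OF assms(1)] by simp
qed

end
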